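(* Let $0<a<r$ and let $x$ be a point with $|x|=a$ and $\xi\neq0$ a vector tangent to the circle $\{|z|=a\}$ at $x$ (i.e. $\langle x,\xi\rangle=0$). Then the flag curvature of the Funk–Finsler metric $\mathcal{F}$ on $\mathbb{D}_K(1)$ satisfies $$\mathbf{K}(x,\xi)=-\Big(1-\tfrac34\Big(\frac{1-r^2}{1-a^2}\Big)^2\Big),$$ which depends only on $a$ and is negative.
   Context: $r=\frac{e^2-1}{e^2+1}$, $\mathbb{D}_K(1)=\{x\in\mathbb{R}^2:|x|<r\}$, $\mathcal{F}(x,\xi)=\frac{\sqrt{(r^2-|x|^2)|\xi|^2+\langle x,\xi\rangle^2}}{r^2-|x|^2}+\frac{(1-r^2)\langle x,\xi\rangle}{(r^2-|x|^2)(1-|x|^2)}$. The flag curvature of a 2-dimensional Finsler metric $F$ is $\mathbf{K}=\mathrm{Ric}/F^2$ where $\mathrm{Ric}=R^i_i$ is the trace of the Riemann curvature $R^i_k=2\partial_{x^k}G^i-\xi^j\partial_{x^j}\partial_{\xi^k}G^i+2G^j\partial_{\xi^j}\partial_{\xi^k}G^i-\partial_{\xi^j}G^i\,\partial_{\xi^k}G^j$ and $G^i=\frac14g^{i\ell}\{[F^2]_{x^k\xi^\ell}\xi^k-[F^2]_{x^\ell}\}$ are the spray coefficients. *)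

theory Defs
  imports "HOL-Analysis.Analysis"
begin

definition rK :: real where
  "rK = (exp 2 - 1) / (exp 2 + 1)"

definition DK1 :: "(real^2) set" where
  "DK1 = {x. norm x < rK}"

definition FunkF :: "real^2 \<Rightarrow> real^2 \<Rightarrow> real" where
  "FunkF x \<xi> =
     sqrt ((rK^2 - (norm x)^2) * (norm \<xi>)^2 + (x \<bullet> \<xi>)^2) / (rK^2 - (norm x)^2)
     + (1 - rK^2) * (x \<bullet> \<xi>) / ((rK^2 - (norm x)^2) * (1 - (norm x)^2))"

definition pdx :: "2 \<Rightarrow> (real^2 \<Rightarrow> real^2 \<Rightarrow> real) \<Rightarrow> real^2 \<Rightarrow> real^2 \<Rightarrow> real" where
  "pdx k f x \<xi> = deriv (\<lambda>t. f (x + t *\<^sub>R axis k 1) \<xi>) 0"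

definition pdy :: "2 \<Rightarrow> (real^2 \<Rightarrow> real^2 \<Rightarrow> real) \<Rightarrow> real^2 \<Rightarrow> real^2 \<Rightarrow> real" where
  "pdy k f x \<xi> = deriv (\<lambda>t. f x (\<xi> + t *\<^sub>R axis k 1)) 0"

definition fund_tensor :: "(real^2 \<Rightarrow> real^2 \<Rightarrow> real) \<Rightarrow> real^2 \<Rightarrow> real^2 \<Rightarrow> real^2^2" where
  "fund_tensor F x \<xi> = (\<chi> i j. (1/2) * pdy i (pdy j (\<lambda>x \<xi>. (F x \<xi>)^2)) x \<xi>)"

definition fund_tensor_inv :: "(real^2 \<Rightarrow> real^2 \<Rightarrow> real) \<Rightarrow> real^2 \<Rightarrow> real^2 \<Rightarrow> real^2^2" where
  "fund_tensor_inv F x \<xi> = matrix_inv (fund_tensor F x \<xi>)"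

definition spray :: "(real^2 \<Rightarrow> real^2 \<Rightarrow> real) \<Rightarrow> 2 \<Rightarrow> real^2 \<Rightarrow> real^2 \<Rightarrow> real" where
  "spray F i x \<xi> = (1/4) * (\<Sum>l\<in>UNIV. fund_tensor_inv F x \<xi> $ i $ l *
       ((\<Sum>k\<in>UNIV. pdx k (pdy l (\<lambda>x \<xi>. (F x \<xi>)^2)) x \<xi> * \<xi> $ k)
        - pdx l (\<lambda>x \<xi>. (F x \<xi>)^2) x \<xi>))"

definition riemann :: "(real^2 \<Rightarrow> real^2 \<Rightarrow> real) \<Rightarrow> 2 \<Rightarrow> 2 \<Rightarrow> real^2 \<Rightarrow> real^2 \<Rightarrow> real" where
  "riemann F i k x \<xi> =
     2 * pdx k (spray F i) x \<xi>
     - (\<Sum>j\<in>UNIV. \<xi> $ j * pdx j (pdy k (spray F i)) x \<xi>)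
     + 2 * (\<Sum>j\<in>UNIV. spray F j x \<xi> * pdy j (pdy k (spray F i)) x \<xi>)
     - (\<Sum>j\<in>UNIV. pdy j (spray F i) x \<xi> * pdy k (spray F j) x \<xi>)"

definition ricci :: "(real^2 \<Rightarrow> real^2 \<Rightarrow> real) \<Rightarrow> real^2 \<Rightarrow> real^2 \<Rightarrow> real" where
  "ricci F x \<xi> = (\<Sum>i\<in>UNIV. riemann F i i x \<xi>)"

definition flag_curvature :: "(real^2 \<Rightarrow> real^2 \<Rightarrow> real) \<Rightarrow> real^2 \<Rightarrow> real^2 \<Rightarrow> real" where
  "flag_curvature F x \<xi> = ricci F x \<xi> / (F x \<xi>)^2"

end

(* FunkF x xi depends only on s = |x|^2, u = <x,xi> and q = |xi|^2, so every derivative entering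
   the flag curvature is obtained by the chain rule from a profile function of (s, u, q).
   The metric satisfies Hamel's equations F_{x^k xi^l} xi^k = F_{x^l}, so it is projectively flat:
   the linear system defining the spray is solved by G^i = P xi^i with P = F_{x^k} xi^k / (2 F).
   With this spray the Ricci trace at <x,xi> = 0 collapses to P^2 - q P_u, and evaluating the
   explicit profile there gives the value; it is negative because 0 < (1 - r^2)/(1 - a^2) < 1. *)

theory Submission
  imports Defs
begin

section \<open>Chain rule for functions of three variables\<close>

type_synonym fun3 = "real \<Rightarrow> real \<Rightarrow> real \<Rightarrow> real"

text \<open>Differentiability of a function of three real variables on a region \<open>R\<close>, phrased as
  the chain rule along differentiable curves: this is all the curvature computation needs.\<close>

definition has_deriv3 :: "(real \<Rightarrow> real \<Rightarrow> real \<Rightarrow> bool) \<Rightarrow> fun3 \<Rightarrow> fun3 \<Rightarrow> fun3 \<Rightarrow> fun3 \<Rightarrow> bool" where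
  "has_deriv3 R h hs hu hq \<longleftrightarrow>
     (\<forall>S U Q S' U' Q'. (S has_real_derivative S') (at 0) \<longrightarrow> (U has_real_derivative U') (at 0)
        \<longrightarrow> (Q has_real_derivative Q') (at 0) \<longrightarrow> R (S 0) (U 0) (Q 0) \<longrightarrow>
        ((\<lambda>t. h (S t) (U t) (Q t)) has_real_derivative
           hs (S 0) (U 0) (Q 0) * S' + hu (S 0) (U 0) (Q 0) * U' + hq (S 0) (U 0) (Q 0) * Q') (at 0))"

lemma has_deriv3I:
  assumes "\<And>S U Q S' U' Q'. (S has_real_derivative S') (at 0) \<Longrightarrow> (U has_real_derivative U') (at 0)
     \<Longrightarrow> (Q has_real_derivative Q') (at 0) \<Longrightarrow> R (S 0) (U 0) (Q 0) \<Longrightarrow>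
     ((\<lambda>t. h (S t) (U t) (Q t)) has_real_derivative
        hs (S 0) (U 0) (Q 0) * S' + hu (S 0) (U 0) (Q 0) * U' + hq (S 0) (U 0) (Q 0) * Q') (at 0)"
  shows "has_deriv3 R h hs hu hq"
  using assms unfolding has_deriv3_def by blast

lemma has_deriv3D:
  assumes "has_deriv3 R h hs hu hq" "(S has_real_derivative S') (at 0)"
    "(U has_real_derivative U') (at 0)" "(Q has_real_derivative Q') (at 0)" "R (S 0) (U 0) (Q 0)"
  shows "((\<lambda>t. h (S t) (U t) (Q t)) has_real_derivative
      hs (S 0) (U 0) (Q 0) * S' + hu (S 0) (U 0) (Q 0) * U' + hq (S 0) (U 0) (Q 0) * Q') (at 0)"
  using assms unfolding has_deriv3_def by blast

lemma has_deriv3_subset: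
  "has_deriv3 R h hs hu hq \<Longrightarrow> (\<And>s u q. R' s u q \<Longrightarrow> R s u q) \<Longrightarrow> has_deriv3 R' h hs hu hq"
  unfolding has_deriv3_def by blast

lemma has_deriv3_cong:
  assumes "has_deriv3 R h a b c"
    and "\<And>s u q. R s u q \<Longrightarrow> a s u q = a' s u q \<and> b s u q = b' s u q \<and> c s u q = c' s u q"
  shows "has_deriv3 R h a' b' c'"
proof (rule has_deriv3I)
  fix S U Q S' U' Q'
  assume d: "(S has_real_derivative S') (at 0)" "(U has_real_derivative U') (at 0)"
    "(Q has_real_derivative Q') (at 0)" "R (S 0) (U 0) (Q 0)"
  show "((\<lambda>t. h (S t) (U t) (Q t)) has_real_derivative
      a' (S 0) (U 0) (Q 0) * S' + b' (S 0) (U 0) (Q 0) * U' + c' (S 0) (U 0) (Q 0) * Q') (at 0)"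
    using has_deriv3D[OF assms(1) d] assms(2)[OF d(4)] by simp
qed

lemma has_deriv3_const: "has_deriv3 R (\<lambda>s u q. k) (\<lambda>s u q. 0) (\<lambda>s u q. 0) (\<lambda>s u q. 0)"
  by (rule has_deriv3I) (auto intro!: derivative_eq_intros)

lemma has_deriv3_snd: "has_deriv3 R (\<lambda>s u q. u) (\<lambda>s u q. 0) (\<lambda>s u q. 1) (\<lambda>s u q. 0)"
  by (rule has_deriv3I) (auto intro!: derivative_eq_intros)

lemma has_deriv3_thd: "has_deriv3 R (\<lambda>s u q. q) (\<lambda>s u q. 0) (\<lambda>s u q. 0) (\<lambda>s u q. 1)"
  by (rule has_deriv3I) (auto intro!: derivative_eq_intros)

lemma has_deriv3_add:
  assumes "has_deriv3 R h1 a1 b1 c1" "has_deriv3 R h2 a2 b2 c2"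
  shows "has_deriv3 R (\<lambda>s u q. h1 s u q + h2 s u q) (\<lambda>s u q. a1 s u q + a2 s u q)
     (\<lambda>s u q. b1 s u q + b2 s u q) (\<lambda>s u q. c1 s u q + c2 s u q)"
proof (rule has_deriv3I, goal_cases)
  case (1 S U Q S' U' Q')
  show ?case using DERIV_add[OF has_deriv3D[OF assms(1) 1] has_deriv3D[OF assms(2) 1]]
    by (simp add: algebra_simps)
qed

lemma has_deriv3_diff:
  assumes "has_deriv3 R h1 a1 b1 c1" "has_deriv3 R h2 a2 b2 c2"
  shows "has_deriv3 R (\<lambda>s u q. h1 s u q - h2 s u q) (\<lambda>s u q. a1 s u q - a2 s u q)
     (\<lambda>s u q. b1 s u q - b2 s u q) (\<lambda>s u q. c1 s u q - c2 s u q)"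
proof (rule has_deriv3I, goal_cases)
  case (1 S U Q S' U' Q')
  show ?case using DERIV_diff[OF has_deriv3D[OF assms(1) 1] has_deriv3D[OF assms(2) 1]]
    by (simp add: algebra_simps)
qed

lemma has_deriv3_mult:
  assumes "has_deriv3 R h1 a1 b1 c1" "has_deriv3 R h2 a2 b2 c2"
  shows "has_deriv3 R (\<lambda>s u q. h1 s u q * h2 s u q)
     (\<lambda>s u q. a1 s u q * h2 s u q + h1 s u q * a2 s u q)
     (\<lambda>s u q. b1 s u q * h2 s u q + h1 s u q * b2 s u q)
     (\<lambda>s u q. c1 s u q * h2 s u q + h1 s u q * c2 s u q)"
proof (rule has_deriv3I, goal_cases)
  case (1 S U Q S' U' Q')
  show ?case using DERIV_mult[OF has_deriv3D[OF assms(1) 1] has_deriv3D[OF assms(2) 1]]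
    by (simp add: algebra_simps)
qed

lemma has_deriv3_power2:
  assumes "has_deriv3 R h a b c"
  shows "has_deriv3 R (\<lambda>s u q. (h s u q)^2) (\<lambda>s u q. 2 * h s u q * a s u q)
     (\<lambda>s u q. 2 * h s u q * b s u q) (\<lambda>s u q. 2 * h s u q * c s u q)"
  unfolding power2_eq_square
  by (rule has_deriv3_cong[OF has_deriv3_mult[OF assms assms]]) (simp add: algebra_simps)

lemma has_deriv3_divide:
  assumes "has_deriv3 R h1 a1 b1 c1" "has_deriv3 R h2 a2 b2 c2"
    and "\<And>s u q. R s u q \<Longrightarrow> h2 s u q \<noteq> 0"
  shows "has_deriv3 R (\<lambda>s u q. h1 s u q / h2 s u q)
     (\<lambda>s u q. (a1 s u q * h2 s u q - h1 s u q * a2 s u q) / (h2 s u q)^2)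
     (\<lambda>s u q. (b1 s u q * h2 s u q - h1 s u q * b2 s u q) / (h2 s u q)^2)
     (\<lambda>s u q. (c1 s u q * h2 s u q - h1 s u q * c2 s u q) / (h2 s u q)^2)"
proof (rule has_deriv3I, goal_cases)
  case (1 S U Q S' U' Q')
  have nz: "h2 (S 0) (U 0) (Q 0) \<noteq> 0" using assms(3) 1(4) by blast
  show ?case
    by (rule DERIV_cong[OF DERIV_divide[OF has_deriv3D[OF assms(1) 1] has_deriv3D[OF assms(2) 1] nz]])
      (use nz in \<open>simp add: field_simps power2_eq_square\<close>)
qed

lemma has_deriv3_sqrt:
  assumes "has_deriv3 R h a b c" "\<And>s u q. R s u q \<Longrightarrow> 0 < h s u q"
  shows "has_deriv3 R (\<lambda>s u q. sqrt (h s u q)) (\<lambda>s u q. a s u q / (2 * sqrt (h s u q)))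
     (\<lambda>s u q. b s u q / (2 * sqrt (h s u q))) (\<lambda>s u q. c s u q / (2 * sqrt (h s u q)))"
proof (rule has_deriv3I, goal_cases)
  case (1 S U Q S' U' Q')
  have pos: "0 < h (S 0) (U 0) (Q 0)" using assms(2) 1(4) by blast
  show ?case
    by (rule DERIV_cong[OF DERIV_chain2[OF DERIV_real_sqrt[OF pos] has_deriv3D[OF assms(1) 1]]])
      (use pos in \<open>simp add: field_simps\<close>)
qed

lemmas has_deriv3_intros =
  has_deriv3_const has_deriv3_snd has_deriv3_thd
  has_deriv3_add has_deriv3_diff has_deriv3_mult has_deriv3_power2

section \<open>The profile of the Funk metric\<close>

lemma rK_pos: "0 < rK" and rK_less_1: "rK < 1"
proof -
  have "exp (2::real) > 1" "exp (2::real) + 1 > 0" by (simp_all add: add_pos_pos)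
  then show "0 < rK" "rK < 1" unfolding rK_def by (simp_all add: divide_less_eq_1_pos)
qed

lemma rK_square_less_1: "rK^2 < 1"
  using rK_pos rK_less_1 by (simp add: power_less_one_iff)

text \<open>The arguments \<open>s u q\<close> of the profile functions below stand for
  \<open>|x|\<^sup>2\<close>, \<open>\<langle>x,\<xi>\<rangle>\<close> and \<open>|\<xi>|\<^sup>2\<close>.\<close>

definition funk_c :: real where "funk_c = 1 - rK^2"
definition funk_A :: "real \<Rightarrow> real" where "funk_A s = rK^2 - s"
definition funk_B :: "real \<Rightarrow> real" where "funk_B s = 1 - s"
definition funk_W :: fun3 where "funk_W s u q = sqrt (funk_A s * q + u^2)"

definition funk_dom :: "real \<Rightarrow> real \<Rightarrow> real \<Rightarrow> bool" where
  "funk_dom s u q \<longleftrightarrow> s < rK^2 \<and> 0 < q"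

lemma funk_c_pos: "0 < funk_c"
  unfolding funk_c_def using rK_square_less_1 by simp

lemma funk_dom_facts:
  assumes "funk_dom s u q"
  shows "0 < funk_A s" "0 < funk_B s" "0 < funk_W s u q" "(funk_W s u q)^2 = funk_A s * q + u^2"
    "funk_c < funk_B s" "0 < q"
proof -
  show A: "0 < funk_A s" and "0 < funk_B s" "funk_c < funk_B s" "0 < q"
    using assms rK_square_less_1 by (auto simp: funk_dom_def funk_A_def funk_B_def funk_c_def)
  have "0 < funk_A s * q + u^2" using A assms by (simp add: funk_dom_def add_pos_nonneg)
  then show "0 < funk_W s u q" "(funk_W s u q)^2 = funk_A s * q + u^2" by (simp_all add: funk_W_def)
qed

lemma funk_dom_nonzero:
  assumes "funk_dom s u q"
  shows "funk_A s \<noteq> 0" "funk_B s \<noteq> 0" "funk_W s u q \<noteq> 0"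
  using funk_dom_facts[OF assms] by simp_all

lemma funk_dom_param:
  assumes "funk_dom s u q"
  obtains W where "funk_W s u q = W" "W \<noteq> 0" "q = (W^2 - u^2) / funk_A s"
  by (rule that[of "funk_W s u q"]) (use funk_dom_facts[OF assms] in \<open>auto simp: field_simps\<close>)

lemma funk_dom_param0:
  assumes "funk_dom s 0 q"
  obtains W A B where "funk_W s 0 q = W" "funk_A s = A" "funk_B s = B"
    "W \<noteq> 0" "A \<noteq> 0" "B \<noteq> 0" "q = W^2 / A"
  by (rule that[of "funk_W s 0 q" "funk_A s" "funk_B s"])
    (use funk_dom_facts[OF assms] in \<open>auto simp: field_simps\<close>)

lemma has_deriv3_funk_A: "has_deriv3 R (\<lambda>s u q. funk_A s) (\<lambda>s u q. -1) (\<lambda>s u q. 0) (\<lambda>s u q. 0)"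
  unfolding funk_A_def by (rule has_deriv3I) (auto intro!: derivative_eq_intros)

lemma has_deriv3_funk_B: "has_deriv3 R (\<lambda>s u q. funk_B s) (\<lambda>s u q. -1) (\<lambda>s u q. 0) (\<lambda>s u q. 0)"
  unfolding funk_B_def by (rule has_deriv3I) (auto intro!: derivative_eq_intros)

lemma has_deriv3_funk_W:
  "has_deriv3 funk_dom funk_W (\<lambda>s u q. - q / (2 * funk_W s u q)) (\<lambda>s u q. u / funk_W s u q)
     (\<lambda>s u q. funk_A s / (2 * funk_W s u q))"
proof -
  have "has_deriv3 funk_dom (\<lambda>s u q. funk_A s * q + u^2) (\<lambda>s u q. - q) (\<lambda>s u q. 2 * u) (\<lambda>s u q. funk_A s)"
    unfolding funk_A_def by (rule has_deriv3I) (auto intro!: derivative_eq_intros simp: algebra_simps)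
  from has_deriv3_sqrt[OF this] have "has_deriv3 funk_dom funk_W (\<lambda>s u q. - q / (2 * funk_W s u q))
      (\<lambda>s u q. 2 * u / (2 * funk_W s u q)) (\<lambda>s u q. funk_A s / (2 * funk_W s u q))"
    unfolding funk_W_def[abs_def] using funk_dom_facts(3,4)
    by (metis funk_W_def power2_eq_square real_sqrt_gt_0_iff)
  then show ?thesis by (rule has_deriv3_cong) simp
qed

lemmas has_deriv3_funk_intros =
  has_deriv3_const has_deriv3_snd has_deriv3_thd has_deriv3_add has_deriv3_mult has_deriv3_divide
  has_deriv3_funk_A has_deriv3_funk_B has_deriv3_funk_W

definition phi :: fun3 where
  "phi s u q = funk_W s u q / funk_A s + funk_c * u / (funk_A s * funk_B s)"

lemma FunkF_eq_phi: "FunkF x y = phi (x \<bullet> x) (x \<bullet> y) (y \<bullet> y)"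
  unfolding FunkF_def phi_def funk_W_def funk_A_def funk_B_def funk_c_def power2_norm_eq_inner by simp

definition phi_s :: fun3 where
  "phi_s s u q = - q / (2 * funk_A s * funk_W s u q) + funk_W s u q / (funk_A s)^2
     + funk_c * u * (funk_A s + funk_B s) / ((funk_A s)^2 * (funk_B s)^2)"
definition phi_u :: fun3 where
  "phi_u s u q = u / (funk_A s * funk_W s u q) + funk_c / (funk_A s * funk_B s)"
definition phi_q :: fun3 where
  "phi_q s u q = 1 / (2 * funk_W s u q)"

definition phi_us :: fun3 where
  "phi_us s u q = u * (1 / ((funk_A s)^2 * funk_W s u q) + q / (2 * funk_A s * (funk_W s u q)^3))
     + funk_c * (funk_A s + funk_B s) / ((funk_A s)^2 * (funk_B s)^2)"
definition phi_uu :: fun3 where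
  "phi_uu s u q = 1 / (funk_A s * funk_W s u q) - u^2 / (funk_A s * (funk_W s u q)^3)"
definition phi_uq :: fun3 where
  "phi_uq s u q = - u / (2 * (funk_W s u q)^3)"
definition phi_qs :: fun3 where
  "phi_qs s u q = q / (4 * (funk_W s u q)^3)"
definition phi_qq :: fun3 where
  "phi_qq s u q = - funk_A s / (4 * (funk_W s u q)^3)"

lemma has_deriv3_phi: "has_deriv3 funk_dom phi phi_s phi_u phi_q"
  unfolding phi_def[abs_def]
  apply (rule has_deriv3_cong)
   apply (rule has_deriv3_funk_intros | (auto dest: funk_dom_nonzero; fail))+
  using funk_dom_nonzero
  by (auto simp: phi_s_def phi_u_def phi_q_def field_simps power2_eq_square)

lemma has_deriv3_phi_u: "has_deriv3 funk_dom phi_u phi_us phi_uu phi_uq"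
  unfolding phi_u_def[abs_def]
  apply (rule has_deriv3_cong)
   apply (rule has_deriv3_funk_intros | (auto dest: funk_dom_nonzero; fail))+
  using funk_dom_nonzero
  by (auto simp: phi_us_def phi_uu_def phi_uq_def field_simps power2_eq_square power3_eq_cube)

lemma has_deriv3_phi_q: "has_deriv3 funk_dom phi_q phi_qs phi_uq phi_qq"
  unfolding phi_q_def[abs_def]
  apply (rule has_deriv3_cong)
   apply (rule has_deriv3_funk_intros | (auto dest: funk_dom_nonzero; fail))+
  using funk_dom_nonzero
  by (auto simp: phi_qs_def phi_uq_def phi_qq_def field_simps power2_eq_square power3_eq_cube)

lemma phi_pos:
  assumes "funk_dom s u q"
  shows "0 < phi s u q"
proof -
  note D = funk_dom_facts[OF assms]
  have "u^2 < (funk_W s u q)^2" using D(1,4,6) by simp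
  then have "\<bar>u\<bar> < funk_W s u q" using D(3) by (simp add: power2_less_imp_less)
  then have "funk_c * \<bar>u\<bar> \<le> funk_c * funk_W s u q" using funk_c_pos by simp
  also have "\<dots> < funk_B s * funk_W s u q" using D(3,5) by simp
  finally have "funk_c * \<bar>u\<bar> < funk_B s * funk_W s u q" .
  moreover have "funk_c * (- u) \<le> funk_c * \<bar>u\<bar>" using funk_c_pos by (intro mult_left_mono) auto
  ultimately have "0 < funk_W s u q * funk_B s + funk_c * u" by (simp add: algebra_simps)
  moreover have "phi s u q = (funk_W s u q * funk_B s + funk_c * u) / (funk_A s * funk_B s)"
    unfolding phi_def using funk_dom_nonzero[OF assms] by (simp add: field_simps)
  ultimately show ?thesis using D(1,2) by simp
qed

text \<open>\<open>sprayN\<close> is \<open>F_{x^k} \<xi>^k = 2 u phi_s + q phi_u\<close>, the numerator of the projective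
  factor \<open>P = F_{x^k} \<xi>^k / (2 F)\<close> of the spray, written out so that it can be differentiated
  once more.\<close>

definition sprayN :: fun3 where
  "sprayN s u q = 2 * u * funk_W s u q / (funk_A s)^2 + funk_c * q / (funk_A s * funk_B s)
     + 2 * funk_c * u^2 * (funk_A s + funk_B s) / ((funk_A s)^2 * (funk_B s)^2)"
definition sprayN_s :: fun3 where
  "sprayN_s s u q = 2 * u * (2 * funk_W s u q / (funk_A s)^3 - q / (2 * funk_W s u q * (funk_A s)^2))
     + funk_c * q * (funk_A s + funk_B s) / ((funk_A s)^2 * (funk_B s)^2)
     + 4 * funk_c * u^2 * ((funk_A s + funk_B s)^2 - funk_A s * funk_B s) / ((funk_A s)^3 * (funk_B s)^3)"
definition sprayN_u :: fun3 where
  "sprayN_u s u q = 2 * funk_W s u q / (funk_A s)^2 + 2 * u^2 / ((funk_A s)^2 * funk_W s u q)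
     + 4 * funk_c * u * (funk_A s + funk_B s) / ((funk_A s)^2 * (funk_B s)^2)"

lemma has_deriv3_sprayN: "has_deriv3 funk_dom sprayN sprayN_s sprayN_u phi_u"
  unfolding sprayN_def[abs_def] power2_eq_square
  apply (rule has_deriv3_cong)
   apply (rule has_deriv3_funk_intros | (auto dest: funk_dom_nonzero; fail))+
  using funk_dom_nonzero
  by (auto simp: sprayN_s_def sprayN_u_def phi_u_def field_simps power2_eq_square power3_eq_cube)

text \<open>Second derivatives of \<open>sprayN\<close> are only needed where \<open>u = 0\<close>.\<close>

definition funk_dom0 :: "real \<Rightarrow> real \<Rightarrow> real \<Rightarrow> bool" where
  "funk_dom0 s u q \<longleftrightarrow> funk_dom s u q \<and> u = 0"

lemma funk_dom0_imp_funk_dom: "funk_dom0 s u q \<Longrightarrow> funk_dom s u q"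
  unfolding funk_dom0_def by blast

definition sprayN_us0 :: fun3 where
  "sprayN_us0 s u q = - q / (funk_W s u q * (funk_A s)^2) + 4 * funk_W s u q / (funk_A s)^3"
definition sprayN_uu0 :: fun3 where
  "sprayN_uu0 s u q = 4 * funk_c * (funk_A s + funk_B s) / ((funk_A s)^2 * (funk_B s)^2)"
definition sprayN_uq0 :: fun3 where
  "sprayN_uq0 s u q = 1 / (funk_A s * funk_W s u q)"

lemma has_deriv3_sprayN_u: "has_deriv3 funk_dom0 sprayN_u sprayN_us0 sprayN_uu0 sprayN_uq0"
  unfolding sprayN_u_def[abs_def] power2_eq_square
  apply (rule has_deriv3_cong)
   apply (rule has_deriv3_subset[where R=funk_dom])
    apply (rule has_deriv3_funk_intros | (auto dest: funk_dom_nonzero; fail))+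
   apply (erule funk_dom0_imp_funk_dom)
  subgoal for s u q
    unfolding funk_dom0_def sprayN_us0_def sprayN_uu0_def sprayN_uq0_def
    by (elim conjE) (use funk_dom_nonzero[of s u q] in \<open>simp add: field_simps power2_eq_square power3_eq_cube\<close>)
  done

definition phi2 :: fun3 where "phi2 s u q = phi s u q * phi s u q"
definition phi2_s :: fun3 where "phi2_s s u q = 2 * phi s u q * phi_s s u q"
definition phi2_u :: fun3 where "phi2_u s u q = 2 * phi s u q * phi_u s u q"
definition phi2_q :: fun3 where "phi2_q s u q = 2 * phi s u q * phi_q s u q"
definition phi2_us :: fun3 where
  "phi2_us s u q = 2 * (phi_s s u q * phi_u s u q + phi s u q * phi_us s u q)"
definition phi2_uu :: fun3 where
  "phi2_uu s u q = 2 * (phi_u s u q * phi_u s u q + phi s u q * phi_uu s u q)"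
definition phi2_uq :: fun3 where
  "phi2_uq s u q = 2 * (phi_q s u q * phi_u s u q + phi s u q * phi_uq s u q)"
definition phi2_qs :: fun3 where
  "phi2_qs s u q = 2 * (phi_s s u q * phi_q s u q + phi s u q * phi_qs s u q)"
definition phi2_qq :: fun3 where
  "phi2_qq s u q = 2 * (phi_q s u q * phi_q s u q + phi s u q * phi_qq s u q)"

lemma has_deriv3_phi2: "has_deriv3 funk_dom phi2 phi2_s phi2_u phi2_q"
  unfolding phi2_def[abs_def]
  by (rule has_deriv3_cong[OF has_deriv3_mult[OF has_deriv3_phi has_deriv3_phi]])
    (simp add: phi2_s_def phi2_u_def phi2_q_def algebra_simps)

lemma has_deriv3_phi2_u: "has_deriv3 funk_dom phi2_u phi2_us phi2_uu phi2_uq"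
  unfolding phi2_u_def[abs_def]
  by (rule has_deriv3_cong[OF has_deriv3_mult[OF has_deriv3_mult[OF has_deriv3_const has_deriv3_phi]
      has_deriv3_phi_u]])
    (simp add: phi2_us_def phi2_uu_def phi2_uq_def algebra_simps)

lemma has_deriv3_phi2_q: "has_deriv3 funk_dom phi2_q phi2_qs phi2_uq phi2_qq"
  unfolding phi2_q_def[abs_def]
  by (rule has_deriv3_cong[OF has_deriv3_mult[OF has_deriv3_mult[OF has_deriv3_const has_deriv3_phi]
      has_deriv3_phi_q]])
    (simp add: phi2_qs_def phi2_qq_def phi2_uq_def algebra_simps)

definition sprayP :: fun3 where "sprayP s u q = sprayN s u q / (2 * phi s u q)"
definition sprayP_s :: fun3 where
  "sprayP_s s u q = (sprayN_s s u q * (2 * phi s u q) - sprayN s u q * (2 * phi_s s u q)) / (2 * phi s u q)^2"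
definition sprayP_u :: fun3 where
  "sprayP_u s u q = (sprayN_u s u q * (2 * phi s u q) - sprayN s u q * (2 * phi_u s u q)) / (2 * phi s u q)^2"
definition sprayP_q :: fun3 where
  "sprayP_q s u q = (phi_u s u q * (2 * phi s u q) - sprayN s u q * (2 * phi_q s u q)) / (2 * phi s u q)^2"

lemma has_deriv3_sprayP: "has_deriv3 funk_dom sprayP sprayP_s sprayP_u sprayP_q"
  unfolding sprayP_def[abs_def]
  by (rule has_deriv3_cong[OF has_deriv3_divide[OF has_deriv3_sprayN
        has_deriv3_mult[OF has_deriv3_const has_deriv3_phi]]])
    (auto simp: sprayP_s_def sprayP_u_def sprayP_q_def dest: phi_pos)

context
  fixes s u q :: real
  assumes dom: "funk_dom s u q"
begin

lemma phi_euler: "u * phi_u s u q + 2 * q * phi_q s u q = phi s u q"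
proof -
  obtain W where W: "funk_W s u q = W" "W \<noteq> 0" "q = (W^2 - u^2) / funk_A s"
    by (rule funk_dom_param[OF dom])
  show ?thesis unfolding phi_u_def phi_q_def phi_def W(1) apply (simp only: W(3))
    using W(2) funk_dom_nonzero[OF dom] by (simp add: field_simps power2_eq_square power3_eq_cube)
qed

lemma phi_u_euler: "u * phi_uu s u q + 2 * q * phi_uq s u q = 0"
proof -
  obtain W where W: "funk_W s u q = W" "W \<noteq> 0" "q = (W^2 - u^2) / funk_A s"
    by (rule funk_dom_param[OF dom])
  show ?thesis unfolding phi_uu_def phi_uq_def W(1) apply (simp only: W(3))
    using W(2) funk_dom_nonzero[OF dom] by (simp add: field_simps power2_eq_square power3_eq_cube)
qed

lemma phi_q_euler: "u * phi_uq s u q + 2 * q * phi_qq s u q = - phi_q s u q"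
proof -
  obtain W where W: "funk_W s u q = W" "W \<noteq> 0" "q = (W^2 - u^2) / funk_A s"
    by (rule funk_dom_param[OF dom])
  show ?thesis unfolding phi_uq_def phi_qq_def phi_q_def W(1) apply (simp only: W(3))
    using W(2) funk_dom_nonzero[OF dom] by (simp add: field_simps power2_eq_square power3_eq_cube)
qed

text \<open>Hamel's equations \<open>F_{x^k \<xi>^l} \<xi>^k = F_{x^l}\<close>, which make the metric projectively
  flat, split into their \<open>x\<close>- and \<open>\<xi>\<close>-components.\<close>

lemma phi_u_hamel: "2 * u * phi_us s u q + q * phi_uu s u q = 2 * phi_s s u q"
proof -
  obtain W where W: "funk_W s u q = W" "W \<noteq> 0" "q = (W^2 - u^2) / funk_A s"
    by (rule funk_dom_param[OF dom])
  show ?thesis unfolding phi_us_def phi_uu_def phi_s_def W(1) apply (simp only: W(3))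
    using W(2) funk_dom_nonzero[OF dom] by (simp add: field_simps power2_eq_square power3_eq_cube)
qed

lemma phi_q_hamel: "2 * u * phi_qs s u q + q * phi_uq s u q = 0"
proof -
  obtain W where W: "funk_W s u q = W" "W \<noteq> 0" "q = (W^2 - u^2) / funk_A s"
    by (rule funk_dom_param[OF dom])
  show ?thesis unfolding phi_qs_def phi_uq_def W(1) apply (simp only: W(3))
    using W(2) funk_dom_nonzero[OF dom] by (simp add: field_simps power2_eq_square power3_eq_cube)
qed

lemma sprayN_eq: "sprayN s u q = 2 * u * phi_s s u q + q * phi_u s u q"
proof -
  obtain W where W: "funk_W s u q = W" "W \<noteq> 0" "q = (W^2 - u^2) / funk_A s"
    by (rule funk_dom_param[OF dom])
  show ?thesis unfolding sprayN_def phi_s_def phi_u_def W(1) apply (simp only: W(3))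
    using W(2) funk_dom_nonzero[OF dom] by (simp add: field_simps power2_eq_square power3_eq_cube)
qed

text \<open>The \<open>x\<close>- and \<open>\<xi>\<close>-components of the linear system
  \<open>g_{il} (4 P \<xi>^l) = [F^2]_{x^k \<xi>^i} \<xi>^k - [F^2]_{x^i}\<close> defining the spray.\<close>

lemma spray_system_x:
  "2 * sprayP s u q * (u * phi2_uu s u q + 2 * q * phi2_uq s u q)
   = 2 * u * phi2_us s u q + q * phi2_uu s u q - 2 * phi2_s s u q"
proof -
  have lhs: "u * phi2_uu s u q + 2 * q * phi2_uq s u q = 2 * phi s u q * phi_u s u q"
  proof -
    have "u * phi2_uu s u q + 2 * q * phi2_uq s u q
        = 2 * phi_u s u q * (u * phi_u s u q + 2 * q * phi_q s u q)
          + 2 * phi s u q * (u * phi_uu s u q + 2 * q * phi_uq s u q)"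
      unfolding phi2_uu_def phi2_uq_def by (simp add: algebra_simps)
    then show ?thesis unfolding phi_euler phi_u_euler by simp
  qed
  have rhs: "2 * u * phi2_us s u q + q * phi2_uu s u q - 2 * phi2_s s u q = 2 * phi_u s u q * sprayN s u q"
  proof -
    have "2 * u * phi2_us s u q + q * phi2_uu s u q - 2 * phi2_s s u q
        = 2 * phi_u s u q * (2 * u * phi_s s u q + q * phi_u s u q)
          + 2 * phi s u q * (2 * u * phi_us s u q + q * phi_uu s u q - 2 * phi_s s u q)"
      unfolding phi2_us_def phi2_uu_def phi2_s_def by (simp add: algebra_simps)
    then show ?thesis unfolding sprayN_eq phi_u_hamel by simp
  qed
  show ?thesis unfolding lhs rhs sprayP_def using phi_pos[OF dom] by (simp add: field_simps)
qed

lemma spray_system_y: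
  "2 * sprayP s u q * (2 * u * phi2_uq s u q + 4 * q * phi2_qq s u q + 2 * phi2_q s u q)
   = 4 * u * phi2_qs s u q + 2 * q * phi2_uq s u q"
proof -
  have lhs: "2 * u * phi2_uq s u q + 4 * q * phi2_qq s u q + 2 * phi2_q s u q = 4 * phi s u q * phi_q s u q"
  proof -
    have "2 * u * phi2_uq s u q + 4 * q * phi2_qq s u q + 2 * phi2_q s u q
        = 4 * phi_q s u q * (u * phi_u s u q + 2 * q * phi_q s u q)
          + 4 * phi s u q * (u * phi_uq s u q + 2 * q * phi_qq s u q) + 4 * phi s u q * phi_q s u q"
      unfolding phi2_uq_def phi2_qq_def phi2_q_def by (simp add: algebra_simps)
    then show ?thesis unfolding phi_euler phi_q_euler by simp
  qed
  have rhs: "4 * u * phi2_qs s u q + 2 * q * phi2_uq s u q = 4 * phi_q s u q * sprayN s u q"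
  proof -
    have "4 * u * phi2_qs s u q + 2 * q * phi2_uq s u q
        = 4 * phi_q s u q * (2 * u * phi_s s u q + q * phi_u s u q)
          + 4 * phi s u q * (2 * u * phi_qs s u q + q * phi_uq s u q)"
      unfolding phi2_qs_def phi2_uq_def by (simp add: algebra_simps)
    then show ?thesis unfolding sprayN_eq phi_q_hamel by simp
  qed
  show ?thesis unfolding lhs rhs sprayP_def using phi_pos[OF dom] by (simp add: field_simps)
qed

lemma fund_tensor_det_profile:
  "4 * (phi2_q s u q)^2 + 2 * phi2_q s u q * (phi2_uu s u q * s + 4 * phi2_uq s u q * u + 4 * phi2_qq s u q * q)
   + 4 * (phi2_uu s u q * phi2_qq s u q - (phi2_uq s u q)^2) * (s * q - u^2)
   = 4 * (phi s u q)^3 * rK^2 / (funk_W s u q)^3"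
proof -
  obtain W where W: "funk_W s u q = W" "W \<noteq> 0" "q = (W^2 - u^2) / funk_A s"
    by (rule funk_dom_param[OF dom])
  obtain A B where AB: "funk_A s = A" "funk_B s = B" by blast
  have s: "s = rK^2 - A" using AB by (simp add: funk_A_def)
  have nz: "A \<noteq> 0" "B \<noteq> 0" using AB funk_dom_nonzero[OF dom] by auto
  show ?thesis
    unfolding phi2_q_def phi2_uu_def phi2_uq_def phi2_qq_def phi_def phi_q_def phi_u_def phi_uu_def
      phi_uq_def phi_qq_def W(1) AB
    apply (simp only: W(3)[unfolded AB])
    apply (simp only: s)
    using W(2) nz by (simp add: field_simps power2_eq_square power3_eq_cube)
qed

end

text \<open>The derivatives of \<open>sprayP_u\<close> cancel from the Ricci trace at \<open>\<langle>x,\<xi>\<rangle> = 0\<close>, so only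
  their existence is needed.\<close>

lemma has_deriv3_sprayP_u_ex: "\<exists>a1 a2 a3. has_deriv3 funk_dom0 sprayP_u a1 a2 a3"
  unfolding sprayP_u_def[abs_def]
  apply (intro exI)
  apply (rule has_deriv3_divide)
    apply (rule has_deriv3_intros has_deriv3_sprayN_u
      has_deriv3_subset[OF has_deriv3_phi funk_dom0_imp_funk_dom]
      has_deriv3_subset[OF has_deriv3_sprayN funk_dom0_imp_funk_dom]
      has_deriv3_subset[OF has_deriv3_phi_u funk_dom0_imp_funk_dom]
      has_deriv3_subset[OF has_deriv3_phi_q funk_dom0_imp_funk_dom]
      | (auto simp: funk_dom0_def dest: phi_pos; fail))+
  done

lemma has_deriv3_sprayP_q_ex:
  "\<exists>b1 b2 b3. has_deriv3 funk_dom0 sprayP_q b1 b2 b3 \<and>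
     (\<forall>s q. funk_dom s 0 q \<longrightarrow> b2 s 0 q = 0 \<and> b3 s 0 q = - sprayP s 0 q / (4 * q^2))"
  unfolding sprayP_q_def[abs_def]
  apply (intro exI conjI)
   apply (rule has_deriv3_divide)
     apply (rule has_deriv3_intros has_deriv3_sprayN_u
      has_deriv3_subset[OF has_deriv3_phi funk_dom0_imp_funk_dom]
      has_deriv3_subset[OF has_deriv3_sprayN funk_dom0_imp_funk_dom]
      has_deriv3_subset[OF has_deriv3_phi_u funk_dom0_imp_funk_dom]
      has_deriv3_subset[OF has_deriv3_phi_q funk_dom0_imp_funk_dom]
      | (auto simp: funk_dom0_def dest: phi_pos; fail))+
  apply (intro allI impI)
  subgoal premises dom for s q
  proof -
    obtain W A B where o: "funk_W s 0 q = W" "funk_A s = A" "funk_B s = B"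
      "W \<noteq> 0" "A \<noteq> 0" "B \<noteq> 0" "q = W^2 / A"
      by (rule funk_dom_param0[OF dom])
    show ?thesis
      unfolding sprayP_def phi_def phi_u_def phi_q_def phi_uu_def phi_uq_def phi_qq_def sprayN_def
        sprayN_u_def phi_s_def phi_us_def phi_qs_def
      apply (simp only: o(1-3))
      apply (simp only: o(7))
      using o(4-6) by (simp add: field_simps power2_eq_square power3_eq_cube)
  qed
  done

lemma sprayP_q_orth:
  assumes "funk_dom s 0 q"
  shows "sprayP_q s 0 q = sprayP s 0 q / (2 * q)"
proof -
  obtain W A B where o: "funk_W s 0 q = W" "funk_A s = A" "funk_B s = B"
    "W \<noteq> 0" "A \<noteq> 0" "B \<noteq> 0" "q = W^2 / A"
    by (rule funk_dom_param0[OF assms])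
  show ?thesis
    unfolding sprayP_def sprayP_q_def phi_def phi_u_def phi_q_def sprayN_def
    apply (simp only: o(1-3))
    apply (simp only: o(7))
    using o(4-6) by (simp add: field_simps power2_eq_square power3_eq_cube)
qed

lemma sprayP_curvature_orth:
  assumes "funk_dom s 0 q"
  shows "(sprayP s 0 q)^2 - q * sprayP_u s 0 q = (phi s 0 q)^2 * - (1 - (3/4) * (funk_c / funk_B s)^2)"
proof -
  obtain W A B where o: "funk_W s 0 q = W" "funk_A s = A" "funk_B s = B"
    "W \<noteq> 0" "A \<noteq> 0" "B \<noteq> 0" "q = W^2 / A"
    by (rule funk_dom_param0[OF assms])
  show ?thesis
    unfolding sprayP_def sprayP_u_def phi_def phi_u_def phi_q_def sprayN_def sprayN_u_def
    apply (simp only: o(1-3))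
    apply (simp only: o(7))
    using o(4-6) by (simp add: field_simps power2_eq_square power3_eq_cube)
qed

section \<open>Partial derivatives along coordinate lines\<close>

abbreviation profile_at :: "fun3 \<Rightarrow> real^2 \<Rightarrow> real^2 \<Rightarrow> real" where
  "profile_at h x y \<equiv> h (x \<bullet> x) (x \<bullet> y) (y \<bullet> y)"

abbreviation FunkF2 :: "real^2 \<Rightarrow> real^2 \<Rightarrow> real" where
  "FunkF2 \<equiv> \<lambda>x y. (FunkF x y)^2"

lemma FunkF2_eq_phi2: "FunkF2 x y = profile_at phi2 x y"
  by (simp add: FunkF_eq_phi phi2_def power2_eq_square)

lemma funk_dom_iff: "funk_dom (x \<bullet> x) (x \<bullet> y) (y \<bullet> y) \<longleftrightarrow> x \<in> DK1 \<and> y \<noteq> 0"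
proof -
  have "x \<bullet> x < rK^2 \<longleftrightarrow> norm x < rK"
    using rK_pos by (metis norm_ge_zero power2_norm_eq_inner power_less_imp_less_base power_strict_mono
        less_le zero_less_numeral)
  then show ?thesis by (simp add: funk_dom_def DK1_def)
qed

lemma open_DK1: "open DK1"
  unfolding DK1_def by (intro open_Collect_less continuous_intros)

lemma eventually_line_in_open:
  fixes x a :: "'a::real_normed_vector"
  assumes "open S" "x \<in> S"
  shows "eventually (\<lambda>t. x + t *\<^sub>R a \<in> S) (nhds 0)"
proof -
  have "((\<lambda>t. x + t *\<^sub>R a) \<longlongrightarrow> x) (at (0::real))"
    by (auto intro!: tendsto_eq_intros)
  from topological_tendstoD[OF this assms] show ?thesis
    using assms(2) by (simp add: eventually_nhds_conv_at)
qed

lemma eventually_line_funk_dom: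
  fixes x y a b :: "real^2"
  assumes "x \<in> DK1" "y \<noteq> 0"
  shows "eventually (\<lambda>t. x + t *\<^sub>R a \<in> DK1) (nhds 0)" "eventually (\<lambda>t. y + t *\<^sub>R b \<noteq> 0) (nhds 0)"
  using eventually_line_in_open[OF open_DK1 assms(1)]
    eventually_line_in_open[OF open_delete[OF open_UNIV, of 0], of y b] assms(2)
  by auto

lemma pdx_eq_on_funk_dom:
  assumes "\<And>x y. x \<in> DK1 \<Longrightarrow> y \<noteq> 0 \<Longrightarrow> f x y = g x y" "x \<in> DK1" "y \<noteq> 0"
    and "((\<lambda>t. g (x + t *\<^sub>R axis k 1) y) has_real_derivative D) (at 0)"
  shows "pdx k f x y = D"
  unfolding pdx_def
proof (rule DERIV_imp_deriv)
  have "eventually (\<lambda>t. f (x + t *\<^sub>R axis k 1) y = g (x + t *\<^sub>R axis k 1) y) (nhds 0)"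
    using eventually_line_funk_dom(1)[OF assms(2,3), of "axis k 1"] by (rule eventually_mono) (simp add: assms(1,3))
  with assms(4) show "((\<lambda>t. f (x + t *\<^sub>R axis k 1) y) has_real_derivative D) (at 0)"
    by (subst DERIV_cong_ev[OF refl _ refl])
qed

lemma pdy_eq_on_funk_dom:
  assumes "\<And>x y. x \<in> DK1 \<Longrightarrow> y \<noteq> 0 \<Longrightarrow> f x y = g x y" "x \<in> DK1" "y \<noteq> 0"
    and "((\<lambda>t. g x (y + t *\<^sub>R axis k 1)) has_real_derivative D) (at 0)"
  shows "pdy k f x y = D"
  unfolding pdy_def
proof (rule DERIV_imp_deriv)
  have "eventually (\<lambda>t. f x (y + t *\<^sub>R axis k 1) = g x (y + t *\<^sub>R axis k 1)) (nhds 0)"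
    using eventually_line_funk_dom(2)[OF assms(2,3), of "axis k 1"] by (rule eventually_mono) (simp add: assms(1,2))
  with assms(4) show "((\<lambda>t. f x (y + t *\<^sub>R axis k 1)) has_real_derivative D) (at 0)"
    by (subst DERIV_cong_ev[OF refl _ refl])
qed

lemma has_real_derivative_inner_line_self:
  "((\<lambda>t. (x + t *\<^sub>R a) \<bullet> (x + t *\<^sub>R a)) has_real_derivative 2 * (x \<bullet> a)) (at 0)"
proof -
  have "(\<lambda>t. (x + t *\<^sub>R a) \<bullet> (x + t *\<^sub>R a)) = (\<lambda>t. x \<bullet> x + 2 * t * (x \<bullet> a) + t^2 * (a \<bullet> a))"
    by (auto simp: inner_add_left inner_add_right inner_commute power2_eq_square algebra_simps)
  then show ?thesis by (auto intro!: derivative_eq_intros)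
qed

lemma has_real_derivative_inner_line:
  "((\<lambda>t. (x + t *\<^sub>R a) \<bullet> y) has_real_derivative a \<bullet> y) (at 0)"
  "((\<lambda>t. y \<bullet> (x + t *\<^sub>R a)) has_real_derivative y \<bullet> a) (at 0)"
proof -
  have "(\<lambda>t. (x + t *\<^sub>R a) \<bullet> y) = (\<lambda>t. x \<bullet> y + t * (a \<bullet> y))"
    "(\<lambda>t. y \<bullet> (x + t *\<^sub>R a)) = (\<lambda>t. y \<bullet> x + t * (y \<bullet> a))"
    by (auto simp: inner_add_left inner_add_right)
  then show "((\<lambda>t. (x + t *\<^sub>R a) \<bullet> y) has_real_derivative a \<bullet> y) (at 0)"
    "((\<lambda>t. y \<bullet> (x + t *\<^sub>R a)) has_real_derivative y \<bullet> a) (at 0)"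
    by (auto intro!: derivative_eq_intros)
qed

lemma has_real_derivative_component_line:
  "((\<lambda>t. (x + t *\<^sub>R a) $ j) has_real_derivative a $ j) (at 0)"
  by (auto intro!: derivative_eq_intros)

lemma has_deriv3_along_axis_x:
  assumes "has_deriv3 R h hs hu hq" "R (x \<bullet> x) (x \<bullet> y) (y \<bullet> y)"
  shows "((\<lambda>t. profile_at h (x + t *\<^sub>R axis k 1) y) has_real_derivative
      2 * profile_at hs x y * x $ k + profile_at hu x y * y $ k) (at 0)"
  by (rule DERIV_cong[OF has_deriv3D[OF assms(1) has_real_derivative_inner_line_self
          has_real_derivative_inner_line(1) DERIV_const]])
    (use assms(2) in \<open>auto simp: inner_axis inner_axis' algebra_simps\<close>)

lemma has_deriv3_along_axis_y:
  assumes "has_deriv3 R h hs hu hq" "R (x \<bullet> x) (x \<bullet> y) (y \<bullet> y)"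
  shows "((\<lambda>t. profile_at h x (y + t *\<^sub>R axis k 1)) has_real_derivative
      profile_at hu x y * x $ k + 2 * profile_at hq x y * y $ k) (at 0)"
  by (rule DERIV_cong[OF has_deriv3D[OF assms(1) DERIV_const
          has_real_derivative_inner_line(2) has_real_derivative_inner_line_self]])
    (use assms(2) in \<open>auto simp: inner_axis inner_axis' algebra_simps\<close>)

section \<open>Fundamental tensor and spray\<close>

lemma pdy_FunkF2:
  assumes "x \<in> DK1" "y \<noteq> 0"
  shows "pdy j FunkF2 x y = profile_at phi2_u x y * x $ j + 2 * profile_at phi2_q x y * y $ j"
  by (rule pdy_eq_on_funk_dom[where g = "profile_at phi2", OF _ assms
        has_deriv3_along_axis_y[OF has_deriv3_phi2]])
    (simp_all add: FunkF2_eq_phi2 funk_dom_iff assms)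

lemma pdx_FunkF2:
  assumes "x \<in> DK1" "y \<noteq> 0"
  shows "pdx j FunkF2 x y = 2 * profile_at phi2_s x y * x $ j + profile_at phi2_u x y * y $ j"
  by (rule pdx_eq_on_funk_dom[where g = "profile_at phi2", OF _ assms
        has_deriv3_along_axis_x[OF has_deriv3_phi2]])
    (simp_all add: FunkF2_eq_phi2 funk_dom_iff assms)

lemma pdy_pdy_FunkF2:
  assumes "x \<in> DK1" "y \<noteq> 0"
  shows "pdy i (pdy j FunkF2) x y =
      profile_at phi2_uu x y * x $ i * x $ j + 2 * profile_at phi2_uq x y * y $ i * x $ j
    + 2 * profile_at phi2_uq x y * x $ i * y $ j + 4 * profile_at phi2_qq x y * y $ i * y $ j
    + 2 * profile_at phi2_q x y * (axis i 1 :: real^2) $ j"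
proof -
  have dom: "funk_dom (x \<bullet> x) (x \<bullet> y) (y \<bullet> y)" using assms by (simp add: funk_dom_iff)
  show ?thesis
    apply (rule pdy_eq_on_funk_dom[where
          g = "\<lambda>x y. profile_at phi2_u x y * x $ j + 2 * profile_at phi2_q x y * y $ j", OF pdy_FunkF2 assms])
      apply assumption+
    apply (rule DERIV_cong)
     apply (rule derivative_eq_intros has_deriv3_along_axis_y[OF has_deriv3_phi2_u dom]
        has_deriv3_along_axis_y[OF has_deriv3_phi2_q dom] has_real_derivative_component_line refl)+
    by (simp add: algebra_simps)
qed

lemma pdx_pdy_FunkF2:
  assumes "x \<in> DK1" "y \<noteq> 0"
  shows "pdx k (pdy l FunkF2) x y =
      2 * profile_at phi2_us x y * x $ k * x $ l + profile_at phi2_uu x y * y $ k * x $ l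
    + profile_at phi2_u x y * (axis k 1 :: real^2) $ l
    + 4 * profile_at phi2_qs x y * x $ k * y $ l + 2 * profile_at phi2_uq x y * y $ k * y $ l"
proof -
  have dom: "funk_dom (x \<bullet> x) (x \<bullet> y) (y \<bullet> y)" using assms by (simp add: funk_dom_iff)
  show ?thesis
    apply (rule pdx_eq_on_funk_dom[where
          g = "\<lambda>x y. profile_at phi2_u x y * x $ l + 2 * profile_at phi2_q x y * y $ l", OF pdy_FunkF2 assms])
      apply assumption+
    apply (rule DERIV_cong)
     apply (rule derivative_eq_intros has_deriv3_along_axis_x[OF has_deriv3_phi2_u dom]
        has_deriv3_along_axis_x[OF has_deriv3_phi2_q dom] has_real_derivative_component_line refl)+
    by (simp add: algebra_simps)
qed

lemma inner_2: "(x::real^2) \<bullet> y = x $ 1 * y $ 1 + x $ 2 * y $ 2"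
  by (simp add: inner_vec_def sum_2)

lemma axis_2_simps: "(axis (1::2) (1::real)) $ 1 = 1" "(axis (1::2) (1::real)) $ 2 = 0"
  "(axis (2::2) (1::real)) $ 1 = 0" "(axis (2::2) (1::real)) $ 2 = 1"
  by (simp_all add: axis_def)

lemma det_fund_tensor_nonzero:
  assumes "x \<in> DK1" "y \<noteq> 0"
  shows "det (fund_tensor FunkF x y) \<noteq> 0"
proof -
  define s u q where "s = x \<bullet> x" and "u = x \<bullet> y" and "q = y \<bullet> y"
  have dom: "funk_dom s u q" using assms by (simp add: funk_dom_iff s_def u_def q_def)
  have "det (fund_tensor FunkF x y) = (1/4) * (4 * (phi2_q s u q)^2
      + 2 * phi2_q s u q * (phi2_uu s u q * s + 4 * phi2_uq s u q * u + 4 * phi2_qq s u q * q)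
      + 4 * (phi2_uu s u q * phi2_qq s u q - (phi2_uq s u q)^2) * (s * q - u^2))"
    unfolding det_2 fund_tensor_def
    apply (simp add: pdy_pdy_FunkF2[OF assms] axis_2_simps)
    unfolding s_def u_def q_def inner_2
    by (simp add: algebra_simps power2_eq_square)
  also have "\<dots> = (phi s u q)^3 * rK^2 / (funk_W s u q)^3"
    unfolding fund_tensor_det_profile[OF dom] by simp
  also have "\<dots> \<noteq> 0"
    using phi_pos[OF dom] funk_dom_facts(3)[OF dom] rK_pos by simp
  finally show ?thesis .
qed

lemma matrix_inv_mult_vec:
  fixes E :: "real^'n^'n"
  assumes "invertible E" "E *v v = b"
  shows "matrix_inv E *v b = v"
proof -
  have "matrix_inv E ** E = mat 1"
    using someI_ex[OF assms(1)[unfolded invertible_def]] unfolding matrix_inv_def by blast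
  then show ?thesis using assms(2) by (metis matrix_vector_mul_assoc matrix_vector_mul_lid)
qed

lemma spray_FunkF:
  assumes "x \<in> DK1" "y \<noteq> 0"
  shows "spray FunkF i x y = profile_at sprayP x y * y $ i"
proof -
  define s u q where "s = x \<bullet> x" and "u = x \<bullet> y" and "q = y \<bullet> y"
  have dom: "funk_dom s u q" using assms by (simp add: funk_dom_iff s_def u_def q_def)
  define E where "E = fund_tensor FunkF x y"
  define b where "b = (\<chi> l. (\<Sum>k\<in>UNIV. pdx k (pdy l FunkF2) x y * y $ k) - pdx l FunkF2 x y)"
  define v where "v = (4 * sprayP s u q) *\<^sub>R y"
  have "(E *v v) $ l - b $ l =
      x $ l * (2 * sprayP s u q * (u * phi2_uu s u q + 2 * q * phi2_uq s u q)
              - (2 * u * phi2_us s u q + q * phi2_uu s u q - 2 * phi2_s s u q))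
    + y $ l * (2 * sprayP s u q * (2 * u * phi2_uq s u q + 4 * q * phi2_qq s u q + 2 * phi2_q s u q)
              - (4 * u * phi2_qs s u q + 2 * q * phi2_uq s u q))" for l
    using exhaust_2[of l]
    apply (elim disjE)
    unfolding E_def b_def v_def fund_tensor_def matrix_vector_mult_def
     apply (simp_all add: sum_2 pdy_pdy_FunkF2[OF assms] pdx_pdy_FunkF2[OF assms] pdx_FunkF2[OF assms]
        axis_2_simps)
    unfolding s_def u_def q_def inner_2
    by (simp_all add: algebra_simps)
  then have "E *v v = b"
    unfolding spray_system_x[OF dom] spray_system_y[OF dom] vec_eq_iff by simp
  then have "matrix_inv E *v b = v"
    using det_fund_tensor_nonzero[OF assms]
    by (intro matrix_inv_mult_vec) (simp_all add: E_def invertible_det_nz)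
  then have "(matrix_inv E *v b) $ i = 4 * sprayP s u q * y $ i" by (simp add: v_def)
  then show ?thesis unfolding spray_def fund_tensor_inv_def E_def[symmetric]
    by (simp add: b_def matrix_vector_mult_def s_def u_def q_def mult_ac)
qed

lemma pdx_spray_FunkF:
  assumes "x \<in> DK1" "y \<noteq> 0"
  shows "pdx k (spray FunkF i) x y = (2 * profile_at sprayP_s x y * x $ k + profile_at sprayP_u x y * y $ k) * y $ i"
proof -
  have dom: "funk_dom (x \<bullet> x) (x \<bullet> y) (y \<bullet> y)" using assms by (simp add: funk_dom_iff)
  show ?thesis
    apply (rule pdx_eq_on_funk_dom[where g = "\<lambda>x y. profile_at sprayP x y * y $ i", OF spray_FunkF assms])
      apply assumption+
    apply (rule DERIV_cong)
     apply (rule derivative_eq_intros has_deriv3_along_axis_x[OF has_deriv3_sprayP dom] refl)+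
    by (simp add: algebra_simps)
qed

lemma pdy_spray_FunkF:
  assumes "x \<in> DK1" "y \<noteq> 0"
  shows "pdy k (spray FunkF i) x y =
      (profile_at sprayP_u x y * x $ k + 2 * profile_at sprayP_q x y * y $ k) * y $ i
    + profile_at sprayP x y * (axis k 1 :: real^2) $ i"
proof -
  have dom: "funk_dom (x \<bullet> x) (x \<bullet> y) (y \<bullet> y)" using assms by (simp add: funk_dom_iff)
  show ?thesis
    apply (rule pdy_eq_on_funk_dom[where g = "\<lambda>x y. profile_at sprayP x y * y $ i", OF spray_FunkF assms])
      apply assumption+
    apply (rule DERIV_cong)
     apply (rule derivative_eq_intros has_deriv3_along_axis_y[OF has_deriv3_sprayP dom]
        has_real_derivative_component_line refl)+
    by (simp add: algebra_simps)
qed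

section \<open>Ricci curvature at vectors orthogonal to the base point\<close>

lemma orthogonal_2_rotation:
  fixes x y :: "real^2"
  assumes "x \<noteq> 0" "x \<bullet> y = 0"
  obtains l where "y $ 1 = - l * x $ 2" "y $ 2 = l * x $ 1"
proof -
  define l where "l = (x $ 1 * y $ 2 - x $ 2 * y $ 1) / (x \<bullet> x)"
  have xy: "x $ 1 * y $ 1 + x $ 2 * y $ 2 = 0" using assms(2) by (simp add: inner_2)
  have nz: "x $ 1 * x $ 1 + x $ 2 * x $ 2 \<noteq> 0" using assms(1) by (simp flip: inner_2)
  have "y $ 1 * (x $ 1 * x $ 1 + x $ 2 * x $ 2) = x $ 1 * (x $ 1 * y $ 1 + x $ 2 * y $ 2) - x $ 2 * (x $ 1 * y $ 2 - x $ 2 * y $ 1)"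
    "y $ 2 * (x $ 1 * x $ 1 + x $ 2 * x $ 2) = x $ 2 * (x $ 1 * y $ 1 + x $ 2 * y $ 2) + x $ 1 * (x $ 1 * y $ 2 - x $ 2 * y $ 1)"
    by (simp_all add: algebra_simps)
  with xy nz have "y $ 1 = - l * x $ 2" "y $ 2 = l * x $ 1"
    unfolding l_def inner_2 by (simp_all add: field_simps)
  then show ?thesis by (rule that)
qed

context
  fixes x y :: "real^2" and a1 a2 a3 b1 b2 b3 :: fun3
  assumes x: "x \<in> DK1" and y: "y \<noteq> 0" and orth: "x \<bullet> y = 0"
    and sprayP_u_deriv: "has_deriv3 funk_dom0 sprayP_u a1 a2 a3"
    and sprayP_q_deriv: "has_deriv3 funk_dom0 sprayP_q b1 b2 b3"
begin

lemma funk_dom_orth: "funk_dom (x \<bullet> x) (x \<bullet> y) (y \<bullet> y)" "funk_dom0 (x \<bullet> x) (x \<bullet> y) (y \<bullet> y)"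
proof -
  show dom: "funk_dom (x \<bullet> x) (x \<bullet> y) (y \<bullet> y)" using x y by (simp add: funk_dom_iff)
  then show "funk_dom0 (x \<bullet> x) (x \<bullet> y) (y \<bullet> y)" using orth by (simp add: funk_dom0_def)
qed

lemma pdx_pdy_spray_FunkF:
  "pdx j (pdy k (spray FunkF i)) x y =
      (2 * profile_at a1 x y * x $ j + profile_at a2 x y * y $ j) * x $ k * y $ i
    + profile_at sprayP_u x y * (axis j 1 :: real^2) $ k * y $ i
    + 2 * (2 * profile_at b1 x y * x $ j + profile_at b2 x y * y $ j) * y $ k * y $ i
    + (2 * profile_at sprayP_s x y * x $ j + profile_at sprayP_u x y * y $ j) * (axis k 1 :: real^2) $ i"
  apply (rule pdx_eq_on_funk_dom[where g = "\<lambda>x y.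
      (profile_at sprayP_u x y * x $ k + 2 * profile_at sprayP_q x y * y $ k) * y $ i
    + profile_at sprayP x y * (axis k 1 :: real^2) $ i", OF pdy_spray_FunkF x y])
    apply assumption+
  apply (rule DERIV_cong)
   apply (rule derivative_eq_intros has_deriv3_along_axis_x[OF sprayP_u_deriv funk_dom_orth(2)]
      has_deriv3_along_axis_x[OF sprayP_q_deriv funk_dom_orth(2)]
      has_deriv3_along_axis_x[OF has_deriv3_sprayP funk_dom_orth(1)]
      has_real_derivative_component_line refl)+
  by (simp add: algebra_simps)

lemma pdy_pdy_spray_FunkF:
  "pdy j (pdy k (spray FunkF i)) x y =
      (profile_at a2 x y * x $ j + 2 * profile_at a3 x y * y $ j) * x $ k * y $ i
    + 2 * (profile_at b2 x y * x $ j + 2 * profile_at b3 x y * y $ j) * y $ k * y $ i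
    + 2 * profile_at sprayP_q x y * (axis j 1 :: real^2) $ k * y $ i
    + (profile_at sprayP_u x y * x $ k + 2 * profile_at sprayP_q x y * y $ k) * (axis j 1 :: real^2) $ i
    + (profile_at sprayP_u x y * x $ j + 2 * profile_at sprayP_q x y * y $ j) * (axis k 1 :: real^2) $ i"
  apply (rule pdy_eq_on_funk_dom[where g = "\<lambda>x y.
      (profile_at sprayP_u x y * x $ k + 2 * profile_at sprayP_q x y * y $ k) * y $ i
    + profile_at sprayP x y * (axis k 1 :: real^2) $ i", OF pdy_spray_FunkF x y])
    apply assumption+
  apply (rule DERIV_cong)
   apply (rule derivative_eq_intros has_deriv3_along_axis_y[OF sprayP_u_deriv funk_dom_orth(2)]
      has_deriv3_along_axis_y[OF sprayP_q_deriv funk_dom_orth(2)]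
      has_deriv3_along_axis_y[OF has_deriv3_sprayP funk_dom_orth(1)]
      has_real_derivative_component_line refl)+
  by (simp add: algebra_simps)

lemma ricci_FunkF_orth:
  assumes "x \<noteq> 0"
    and "b2 (x \<bullet> x) 0 (y \<bullet> y) = 0" "b3 (x \<bullet> x) 0 (y \<bullet> y) = - sprayP (x \<bullet> x) 0 (y \<bullet> y) / (4 * (y \<bullet> y)^2)"
  shows "ricci FunkF x y = (sprayP (x \<bullet> x) 0 (y \<bullet> y))^2 - (y \<bullet> y) * sprayP_u (x \<bullet> x) 0 (y \<bullet> y)"
proof -
  have dom0: "funk_dom (x \<bullet> x) 0 (y \<bullet> y)" using funk_dom_orth(1) orth by simp
  obtain l where y1: "y $ 1 = - l * x $ 2" and y2: "y $ 2 = l * x $ 1"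
    by (rule orthogonal_2_rotation[OF assms(1) orth])
  obtain P Ps Pu Pq A1 A2 A3 B1 B2 B3 where at:
    "sprayP (x \<bullet> x) 0 (y \<bullet> y) = P" "sprayP_s (x \<bullet> x) 0 (y \<bullet> y) = Ps"
    "sprayP_u (x \<bullet> x) 0 (y \<bullet> y) = Pu" "sprayP_q (x \<bullet> x) 0 (y \<bullet> y) = Pq"
    "a1 (x \<bullet> x) 0 (y \<bullet> y) = A1" "a2 (x \<bullet> x) 0 (y \<bullet> y) = A2" "a3 (x \<bullet> x) 0 (y \<bullet> y) = A3"
    "b1 (x \<bullet> x) 0 (y \<bullet> y) = B1" "b2 (x \<bullet> x) 0 (y \<bullet> y) = B2" "b3 (x \<bullet> x) 0 (y \<bullet> y) = B3"
    by blast
  obtain Q where Q: "y \<bullet> y = Q" by blast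
  have Qnz: "Q \<noteq> 0" using y Q by auto
  have QQ: "Q = l * l * (x $ 1 * x $ 1 + x $ 2 * x $ 2)"
    using Q unfolding inner_2[of y y] y1 y2 by (simp add: algebra_simps)
  note simps = pdx_spray_FunkF[OF x y] pdy_spray_FunkF[OF x y] pdx_pdy_spray_FunkF pdy_pdy_spray_FunkF
    spray_FunkF[OF x y] axis_2_simps orth
  have T1: "(\<Sum>i\<in>UNIV. pdx i (spray FunkF i) x y) = Pu * Q"
    unfolding sum_2 apply (simp only: simps) apply (simp only: at) apply (simp only: Q y1 y2)
    unfolding QQ by (simp add: algebra_simps)
  have T2: "(\<Sum>i\<in>UNIV. \<Sum>j\<in>UNIV. y $ j * pdx j (pdy i (spray FunkF i)) x y) = 3 * Pu * Q + 2 * B2 * Q^2"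
    unfolding sum_2 apply (simp only: simps) apply (simp only: at) apply (simp only: Q y1 y2)
    unfolding QQ by (simp add: algebra_simps power2_eq_square)
  have T3: "(\<Sum>i\<in>UNIV. \<Sum>j\<in>UNIV. spray FunkF j x y * pdy j (pdy i (spray FunkF i)) x y)
      = P * (4 * B3 * Q^2 + 8 * Pq * Q)"
    unfolding sum_2 apply (simp only: simps) apply (simp only: at) apply (simp only: Q y1 y2)
    unfolding QQ by (simp add: algebra_simps power2_eq_square)
  have T4: "(\<Sum>i\<in>UNIV. \<Sum>j\<in>UNIV. pdy j (spray FunkF i) x y * pdy i (spray FunkF j) x y)
      = 4 * Pq^2 * Q^2 + 4 * P * Pq * Q + 2 * P^2"
    unfolding sum_2 apply (simp only: simps) apply (simp only: at) apply (simp only: Q y1 y2)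
    unfolding QQ by (simp add: algebra_simps power2_eq_square)
  have "ricci FunkF x y = 2 * (\<Sum>i\<in>UNIV. pdx i (spray FunkF i) x y)
      - (\<Sum>i\<in>UNIV. \<Sum>j\<in>UNIV. y $ j * pdx j (pdy i (spray FunkF i)) x y)
      + 2 * (\<Sum>i\<in>UNIV. \<Sum>j\<in>UNIV. spray FunkF j x y * pdy j (pdy i (spray FunkF i)) x y)
      - (\<Sum>i\<in>UNIV. \<Sum>j\<in>UNIV. pdy j (spray FunkF i) x y * pdy i (spray FunkF j) x y)"
    unfolding ricci_def riemann_def sum_2 by (simp add: algebra_simps)
  moreover have "Pq = P / (2 * Q)" "B2 = 0" "B3 = - P / (4 * Q^2)"
    using sprayP_q_orth[OF dom0] assms(2,3) at Q by auto
  ultimately show ?thesis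
    unfolding T1 T2 T3 T4 at unfolding Q using Qnz by (simp add: field_simps power2_eq_square)
qed

end

lemma flag_curvature_FunkF_orth:
  assumes "x \<in> DK1" "x \<noteq> 0" "y \<noteq> 0" "x \<bullet> y = 0"
  shows "flag_curvature FunkF x y = - (1 - (3/4) * (funk_c / funk_B (x \<bullet> x))^2)"
proof -
  have dom0: "funk_dom (x \<bullet> x) 0 (y \<bullet> y)" using funk_dom_iff[of x y] assms by simp
  obtain a1 a2 a3 where "has_deriv3 funk_dom0 sprayP_u a1 a2 a3"
    using has_deriv3_sprayP_u_ex by blast
  moreover obtain b1 b2 b3 where "has_deriv3 funk_dom0 sprayP_q b1 b2 b3"
    and "b2 (x \<bullet> x) 0 (y \<bullet> y) = 0" "b3 (x \<bullet> x) 0 (y \<bullet> y) = - sprayP (x \<bullet> x) 0 (y \<bullet> y) / (4 * (y \<bullet> y)^2)"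
    using has_deriv3_sprayP_q_ex dom0 by blast
  ultimately have "ricci FunkF x y = (sprayP (x \<bullet> x) 0 (y \<bullet> y))^2 - (y \<bullet> y) * sprayP_u (x \<bullet> x) 0 (y \<bullet> y)"
    using ricci_FunkF_orth assms by blast
  also have "\<dots> = (FunkF x y)^2 * - (1 - (3/4) * (funk_c / funk_B (x \<bullet> x))^2)"
    unfolding sprayP_curvature_orth[OF dom0] FunkF_eq_phi assms(4) ..
  finally show ?thesis
    unfolding flag_curvature_def FunkF_eq_phi using phi_pos[OF dom0] assms(4) by simp
qed

theorem corollary4p3:
  fixes a :: real and x \<xi> :: "real^2"
  assumes "0 < a" and "a < rK"
    and "norm x = a"
    and "\<xi> \<noteq> 0" and "x \<bullet> \<xi> = 0"
  shows "flag_curvature FunkF x \<xi> = - (1 - (3/4) * ((1 - rK^2) / (1 - a^2))^2)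
         \<and> flag_curvature FunkF x \<xi> < 0"
proof -
  have x: "x \<in> DK1" "x \<noteq> 0" using assms(1-3) by (auto simp: DK1_def)
  have xx: "x \<bullet> x = a^2" using assms(3) by (simp flip: power2_norm_eq_inner)
  have dom0: "funk_dom (x \<bullet> x) 0 (\<xi> \<bullet> \<xi>)" using funk_dom_iff[of x \<xi>] x(1) assms(4,5) by simp
  have K: "flag_curvature FunkF x \<xi> = - (1 - (3/4) * ((1 - rK^2) / (1 - a^2))^2)"
    using flag_curvature_FunkF_orth[OF x assms(4,5)] by (simp add: funk_c_def funk_B_def xx)
  have "0 < funk_c / funk_B (x \<bullet> x)" "funk_c / funk_B (x \<bullet> x) < 1"
    using funk_dom_facts(2,5)[OF dom0] funk_c_pos by simp_all
  then have "((1 - rK^2) / (1 - a^2))^2 < 1"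
    by (simp add: power_less_one_iff funk_c_def funk_B_def xx)
  with K show ?thesis by simp
qed

end
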